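(* Let $p,k\ge 1$ be integers, let $a_1,\dots,a_k\in\mathbb{R}$, and let $\mathbf{f}:\mathbb{R}^p\to\mathbb{R}^p$ be a differentiable flux. Let $\mathbb{M}_1,\dots,\mathbb{M}_k:\mathbb{R}^p\to\mathbb{R}^p$ be differentiable maps (the Maxwellians) satisfying, for all $\mathbf{u}$, $$\sum_{i=1}^k \mathbb{M}_i(\mathbf{u})=\mathbf{u},\qquad \sum_{i=1}^k a_i\,\mathbb{M}_i(\mathbf{u})=\mathbf{f}(\mathbf{u}),$$ and define $\mathbf{m}_2(\mathbf{u})=\sum_{i=1}^k a_i^2\,\mathbb{M}_i(\mathbf{u})$. Fix $\mathbf{u}$ and suppose there exists a strictly convex entropy $\eta(\mathbf{u})$ with Hessian matrix $\mathbf{A}_0$ such that: 1. $\mathbf{A}_0\mathbf{f}'(\mathbf{u})$ is symmetric; 2. the Maxwellians are monotone: $\mathbf{A}_0\mathbb{M}_i'(\mathbf{u})$ is symmetric positive definite for all $i\in\{1,\dots,k\}$; 3. $\min_i |a_i| > \rho(\mathbf{f}'(\mathbf{u}))$, where $\rho$ denotes the spectral radius. Then the matrix $\mathbf{K}=\mathbf{A}_0\left[\mathbf{m}_2'(\mathbf{u})-(\mathbf{f}'(\mathbf{u}))^2\right]$ is symmetric positive semi-definite.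
   Context: This arises from a kinetic (BGK-type) model with unknowns $\mathbf{F}\in\mathbb{R}^{kp}$, diagonal velocity matrix $\Lambda=\mathrm{diag}(a_1\mathbf{I}_p,\dots,a_k\mathbf{I}_p)$, projector $\mathbb{P}=(\mathbf{I}_p\ \cdots\ \mathbf{I}_p)$ and Maxwellian $\mathbb{M}=(\mathbb{M}_1,\dots,\mathbb{M}_k)$ satisfying $\mathbb{P}\mathbb{M}(\mathbf{u})=\mathbf{u}$ and $\mathbb{P}\Lambda\mathbb{M}(\mathbf{u})=\mathbf{f}(\mathbf{u})$; then $\mathbf{m}_2=\mathbb{P}\Lambda^2\mathbb{M}$ is the second moment of the Maxwellian. Primes denote Jacobian matrices with respect to $\mathbf{u}$; $\mathbf{A}_0$ is symmetric positive definite since $\eta$ is strictly convex. *)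

theory Defs
  imports "HOL-Analysis.Analysis"
begin

definition jacobian :: "(real^'n \<Rightarrow> real^'m) \<Rightarrow> real^'n \<Rightarrow> real^'n^'m" where
  "jacobian f x = matrix (frechet_derivative f (at x))"

definition has_hessian :: "(real^'n \<Rightarrow> real) \<Rightarrow> real^'n^'n \<Rightarrow> real^'n \<Rightarrow> bool" where
  "has_hessian eta H x \<longleftrightarrow>
     (\<exists>g. (\<forall>y. (eta has_derivative (\<lambda>h. g y \<bullet> h)) (at y)) \<and>
          (g has_derivative (\<lambda>h. H *v h)) (at x))"

definition strictly_convex :: "(real^'n \<Rightarrow> real) \<Rightarrow> bool" where
  "strictly_convex eta \<longleftrightarrow>
     (\<forall>x y t. x \<noteq> y \<longrightarrow> 0 < t \<longrightarrow> t < 1 \<longrightarrow>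
        eta ((1 - t) *\<^sub>R x + t *\<^sub>R y) < (1 - t) * eta x + t * eta y)"

definition symmetric_mat :: "real^'n^'n \<Rightarrow> bool" where
  "symmetric_mat A \<longleftrightarrow> transpose A = A"

definition pos_def_mat :: "real^'n^'n \<Rightarrow> bool" where
  "pos_def_mat A \<longleftrightarrow> (\<forall>x. x \<noteq> 0 \<longrightarrow> 0 < x \<bullet> (A *v x))"

definition pos_semidef_mat :: "real^'n^'n \<Rightarrow> bool" where
  "pos_semidef_mat A \<longleftrightarrow> (\<forall>x. 0 \<le> x \<bullet> (A *v x))"

definition complexify :: "real^'n^'n \<Rightarrow> complex^'n^'n" where
  "complexify A = (\<chi> i j. complex_of_real (A $ i $ j))"

definition eigenvalues_c :: "real^'n^'n \<Rightarrow> complex set" where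
  "eigenvalues_c A = {l. \<exists>v. v \<noteq> 0 \<and> complexify A *v v = l *s v}"

definition spectral_radius :: "real^'n^'n \<Rightarrow> real" where
  "spectral_radius A = Sup (cmod ` eigenvalues_c A)"

end

theory Submission
  imports Defs
begin

text \<open>Write \<open>J\<^sub>i\<close> for the Jacobian of \<open>\<bbbM>\<^sub>i\<close> at \<open>u\<close>. Differentiating the moment relations
  gives \<open>\<Sum>\<^sub>i J\<^sub>i = I\<close> and \<open>f'(u) = \<Sum>\<^sub>i a\<^sub>i J\<^sub>i\<close>, so \<open>m\<^sub>2'(u) - f'(u)\<^sup>2\<close> is a variance of the
  velocities \<open>a\<^sub>i\<close> with matrix weights \<open>J\<^sub>i\<close>. Accordingly, as in the scalar identity
  \<open>\<Sum>\<^sub>i p\<^sub>i (a\<^sub>i - m)\<^sup>2 = \<Sum>\<^sub>i p\<^sub>i a\<^sub>i\<^sup>2 - m\<^sup>2\<close>, one gets \<open>x \<bullet> K x = \<Sum>\<^sub>i w\<^sub>i \<bullet> A\<^sub>0 J\<^sub>i w\<^sub>i\<close> with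
  \<open>w\<^sub>i = a\<^sub>i x - f'(u) x\<close>, a sum of nonnegative terms by monotonicity of the Maxwellians.\<close>

lemma symmetric_mat_iff_inner:
  fixes A :: "real^'n^'n"
  shows "symmetric_mat A \<longleftrightarrow> (\<forall>x y. x \<bullet> (A *v y) = y \<bullet> (A *v x))"
proof -
  have "x \<bullet> (A *v y) = y \<bullet> (transpose A *v x)" for x y
    by (simp add: dot_lmul_matrix[symmetric] inner_commute)
  then have "(\<forall>x y. x \<bullet> (A *v y) = y \<bullet> (A *v x)) \<longleftrightarrow> (\<forall>x. transpose A *v x = A *v x)"
    by (metis vector_eq_ldot)
  then show ?thesis
    unfolding symmetric_mat_def by (metis matrix_eq)
qed

lemma symmetric_mat_diff:
  "symmetric_mat A \<Longrightarrow> symmetric_mat B \<Longrightarrow> symmetric_mat (A - B)"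
  unfolding symmetric_mat_def transpose_def by (simp add: vec_eq_iff)

lemma symmetric_mat_scaleR_sum:
  fixes B :: "'i \<Rightarrow> real^'n^'n"
  assumes "\<And>i. i \<in> I \<Longrightarrow> symmetric_mat (B i)"
  shows "symmetric_mat (\<Sum>i\<in>I. c i *\<^sub>R B i)"
  using assms unfolding symmetric_mat_def transpose_def
  by (auto simp: vec_eq_iff intro!: sum.cong)

lemma pos_def_imp_pos_semidef_mat: "pos_def_mat A \<Longrightarrow> pos_semidef_mat A"
  unfolding pos_def_mat_def pos_semidef_mat_def by (metis order.refl inner_zero_left less_imp_le)

lemma matrix_vector_mult_scaleR_sum:
  fixes A :: "'i \<Rightarrow> real^'n^'m"
  shows "(\<Sum>i\<in>I. c i *\<^sub>R A i) *v x = (\<Sum>i\<in>I. c i *\<^sub>R (A i *v x))"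
  by (induction I rule: infinite_finite_induct)
     (simp_all add: matrix_vector_mult_add_rdistrib scaleR_matrix_vector_assoc)

lemma matrix_mult_scaleR_sum_right:
  fixes A :: "real^'n^'m" and B :: "'i \<Rightarrow> real^'k^'n"
  shows "A ** (\<Sum>i\<in>I. c i *\<^sub>R B i) = (\<Sum>i\<in>I. c i *\<^sub>R (A ** B i))"
  by (induction I rule: infinite_finite_induct)
     (simp_all add: matrix_add_ldistrib matrix_scalar_ac scalar_matrix_assoc)

lemma matrix_diff_ldistrib:
  fixes A :: "real^'n^'m"
  shows "A ** (B - C) = A ** B - A ** C"
  by (simp add: matrix_matrix_mult_def vec_eq_iff sum_subtractf right_diff_distrib)

lemma jacobian_eqI:
  assumes "(g has_derivative (\<lambda>h. A *v h)) (at x)"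
  shows "jacobian g x = A"
  using frechet_derivative_at[OF assms] unfolding jacobian_def
  by (metis matrix_of_matrix_vector_mul)

lemma has_derivative_jacobian:
  assumes "g differentiable (at x)"
  shows "(g has_derivative (\<lambda>h. jacobian g x *v h)) (at x)"
proof -
  have "(g has_derivative frechet_derivative g (at x)) (at x)"
    using assms by (rule frechet_derivative_works[THEN iffD1])
  moreover from this have "linear (frechet_derivative g (at x))"
    by (rule has_derivative_linear)
  ultimately show ?thesis
    unfolding jacobian_def by (simp add: matrix_works)
qed

lemma jacobian_ident: "jacobian (\<lambda>v. v) x = mat 1"
  by (rule jacobian_eqI) simp

lemma jacobian_scaleR_sum:
  assumes "\<And>i. i \<in> I \<Longrightarrow> g i differentiable (at x)"
  shows "jacobian (\<lambda>v. \<Sum>i\<in>I. c i *\<^sub>R g i v) x = (\<Sum>i\<in>I. c i *\<^sub>R jacobian (g i) x)"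
proof (rule jacobian_eqI)
  have "((\<lambda>v. \<Sum>i\<in>I. c i *\<^sub>R g i v) has_derivative
        (\<lambda>h. \<Sum>i\<in>I. c i *\<^sub>R (jacobian (g i) x *v h))) (at x)"
    by (intro has_derivative_sum has_derivative_scaleR_right has_derivative_jacobian assms)
  then show "((\<lambda>v. \<Sum>i\<in>I. c i *\<^sub>R g i v) has_derivative
        (\<lambda>h. (\<Sum>i\<in>I. c i *\<^sub>R jacobian (g i) x) *v h)) (at x)"
    by (simp add: matrix_vector_mult_scaleR_sum)
qed

locale symmetrized_partition =
  fixes I :: "'i set"
    and J :: "'i \<Rightarrow> real^'n^'n"
    and a :: "'i \<Rightarrow> real"
    and A0 F :: "real^'n^'n"
  assumes partition: "(\<Sum>i\<in>I. J i) = mat 1"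
    and F_eq: "F = (\<Sum>i\<in>I. a i *\<^sub>R J i)"
    and symmetric: "\<And>i. i \<in> I \<Longrightarrow> symmetric_mat (A0 ** J i)"
begin

lemma A0_eq_sum: "A0 = (\<Sum>i\<in>I. 1 *\<^sub>R (A0 ** J i))"
  using matrix_mult_scaleR_sum_right[of A0 "\<lambda>_. 1" J I] partition by simp

lemma A0_F_eq_sum: "A0 ** F = (\<Sum>i\<in>I. a i *\<^sub>R (A0 ** J i))"
  unfolding F_eq by (rule matrix_mult_scaleR_sum_right)

lemma symmetric_A0: "symmetric_mat A0"
  by (subst A0_eq_sum) (intro symmetric_mat_scaleR_sum symmetric)

lemma symmetric_A0_F: "symmetric_mat (A0 ** F)"
  unfolding A0_F_eq_sum by (intro symmetric_mat_scaleR_sum symmetric)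

lemma symmetric_variance:
  "symmetric_mat (A0 ** ((\<Sum>i\<in>I. (a i)\<^sup>2 *\<^sub>R J i) - F ** F))"
proof -
  have "transpose ((A0 ** F) ** F) = transpose F ** (A0 ** F)"
    using symmetric_A0_F by (simp add: matrix_transpose_mul symmetric_mat_def)
  also have "\<dots> = transpose (A0 ** F) ** F"
    using symmetric_A0 by (simp add: matrix_transpose_mul symmetric_mat_def matrix_mul_assoc)
  also have "\<dots> = (A0 ** F) ** F"
    using symmetric_A0_F by (simp add: symmetric_mat_def)
  finally have "symmetric_mat ((A0 ** F) ** F)"
    unfolding symmetric_mat_def .
  moreover have "symmetric_mat (A0 ** (\<Sum>i\<in>I. (a i)\<^sup>2 *\<^sub>R J i))"
    unfolding matrix_mult_scaleR_sum_right by (intro symmetric_mat_scaleR_sum symmetric)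
  ultimately show ?thesis
    by (simp add: matrix_diff_ldistrib matrix_mul_assoc symmetric_mat_diff)
qed

lemma quadratic_form_variance:
  "x \<bullet> (A0 ** ((\<Sum>i\<in>I. (a i)\<^sup>2 *\<^sub>R J i) - F ** F) *v x)
     = (\<Sum>i\<in>I. (a i *\<^sub>R x - F *v x) \<bullet> (A0 ** J i *v (a i *\<^sub>R x - F *v x)))"
proof -
  define y where "y = F *v x"
  define q where "q i v w = v \<bullet> (A0 ** J i *v w)" for i v w
  have q_sum: "(\<Sum>i\<in>I. c i * q i v w) = v \<bullet> ((\<Sum>i\<in>I. c i *\<^sub>R (A0 ** J i)) *v w)"
    for c v w
    unfolding q_def matrix_vector_mult_scaleR_sum by (simp add: inner_sum_right)
  have "x \<bullet> (A0 ** ((\<Sum>i\<in>I. (a i)\<^sup>2 *\<^sub>R J i) - F ** F) *v x)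
      = (\<Sum>i\<in>I. (a i)\<^sup>2 * q i x x) - x \<bullet> (A0 ** F *v y)"
    unfolding q_sum y_def
    by (simp add: matrix_diff_ldistrib matrix_mult_scaleR_sum_right matrix_vector_mult_diff_rdistrib
        inner_diff_right matrix_vector_mul_assoc matrix_mul_assoc)
  also have "x \<bullet> (A0 ** F *v y) = y \<bullet> (A0 ** F *v x)"
    using symmetric_A0_F symmetric_mat_iff_inner by blast
  also have "(\<Sum>i\<in>I. (a i)\<^sup>2 * q i x x) - y \<bullet> (A0 ** F *v x)
      = (\<Sum>i\<in>I. (a i)\<^sup>2 * q i x x) - 2 * (\<Sum>i\<in>I. a i * q i y x) + (\<Sum>i\<in>I. 1 * q i y y)"
  proof -
    have "(\<Sum>i\<in>I. a i * q i y x) = y \<bullet> (A0 ** F *v x)"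
      unfolding q_sum A0_F_eq_sum ..
    moreover have "(\<Sum>i\<in>I. 1 * q i y y) = y \<bullet> (A0 ** F *v x)"
      unfolding q_sum A0_eq_sum[symmetric] y_def by (simp add: matrix_vector_mul_assoc)
    ultimately show ?thesis by simp
  qed
  also have "\<dots> = (\<Sum>i\<in>I. q i (a i *\<^sub>R x - y) (a i *\<^sub>R x - y))"
  proof -
    have "q i (a i *\<^sub>R x - y) (a i *\<^sub>R x - y)
        = (a i)\<^sup>2 * q i x x - 2 * a i * q i y x + q i y y" if "i \<in> I" for i
      using symmetric[OF that] unfolding q_def symmetric_mat_iff_inner
      by (simp add: algebra_simps power2_eq_square)
    then have "(\<Sum>i\<in>I. q i (a i *\<^sub>R x - y) (a i *\<^sub>R x - y))
        = (\<Sum>i\<in>I. (a i)\<^sup>2 * q i x x - 2 * (a i * q i y x) + 1 * q i y y)"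
      by (intro sum.cong) simp_all
    then show ?thesis
      by (simp add: sum.distrib sum_subtractf sum_distrib_left)
  qed
  finally show ?thesis
    unfolding q_def y_def .
qed

lemma pos_semidef_variance:
  assumes "\<And>i. i \<in> I \<Longrightarrow> pos_semidef_mat (A0 ** J i)"
  shows "pos_semidef_mat (A0 ** ((\<Sum>i\<in>I. (a i)\<^sup>2 *\<^sub>R J i) - F ** F))"
  using assms unfolding pos_semidef_mat_def quadratic_form_variance by (simp add: sum_nonneg)

end

theorem proposition1:
  fixes a :: "'k::finite \<Rightarrow> real"
    and f :: "real^'p \<Rightarrow> real^'p"
    and M :: "'k \<Rightarrow> real^'p \<Rightarrow> real^'p"
    and u :: "real^'p"
    and eta :: "real^'p \<Rightarrow> real"
    and A0 :: "real^'p^'p"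
  assumes f_diff: "\<And>v. f differentiable (at v)"
    and M_diff: "\<And>i v. M i differentiable (at v)"
    and M_sum: "\<And>v. (\<Sum>i\<in>UNIV. M i v) = v"
    and M_flux: "\<And>v. (\<Sum>i\<in>UNIV. a i *\<^sub>R M i v) = f v"
    and eta_convex: "strictly_convex eta"
    and eta_hess: "has_hessian eta A0 u"
    and A0_pd: "symmetric_mat A0" "pos_def_mat A0"
    and sym_flux: "symmetric_mat (A0 ** jacobian f u)"
    and monotone: "\<And>i. symmetric_mat (A0 ** jacobian (M i) u) \<and> pos_def_mat (A0 ** jacobian (M i) u)"
    and subchar: "(MIN i. \<bar>a i\<bar>) > spectral_radius (jacobian f u)"
  shows "symmetric_mat (A0 ** (jacobian (\<lambda>v. \<Sum>i\<in>UNIV. (a i)\<^sup>2 *\<^sub>R M i v) u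
                               - jacobian f u ** jacobian f u))
       \<and> pos_semidef_mat (A0 ** (jacobian (\<lambda>v. \<Sum>i\<in>UNIV. (a i)\<^sup>2 *\<^sub>R M i v) u
                               - jacobian f u ** jacobian f u))"
proof -
  define J where "J i = jacobian (M i) u" for i
  have jacobian_moment: "jacobian (\<lambda>v. \<Sum>i\<in>UNIV. c i *\<^sub>R M i v) u = (\<Sum>i\<in>UNIV. c i *\<^sub>R J i)"
    for c
    unfolding J_def using M_diff by (rule jacobian_scaleR_sum)
  interpret symmetrized_partition UNIV J a A0 "jacobian f u"
  proof
    show "(\<Sum>i\<in>UNIV. J i) = mat 1"
      using jacobian_moment[of "\<lambda>_. 1"] by (simp add: M_sum jacobian_ident)
    show "jacobian f u = (\<Sum>i\<in>UNIV. a i *\<^sub>R J i)"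
      using jacobian_moment[of a] by (simp add: M_flux)
    show "symmetric_mat (A0 ** J i)" for i
      using monotone by (simp add: J_def)
  qed
  have "pos_semidef_mat (A0 ** J i)" for i
    unfolding J_def using monotone by (blast intro: pos_def_imp_pos_semidef_mat)
  then show ?thesis
    unfolding jacobian_moment using symmetric_variance pos_semidef_variance by simp
qed

end
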